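(* (Weak progress for $\lambda_{\mathrm{act}}$ configurations.) Let $\cdot ; \cdot \vdash \mathcal{C}$, suppose $\mathcal{C}$ cannot reduce (there is no $\mathcal{C}'$ with $\mathcal{C}\longrightarrow\mathcal{C}'$), and let $\mathcal{C}' = (\nu a_1) \ldots (\nu a_n)(\langle a_1, M_1, \vec V_1\rangle \parallel \ldots \parallel \langle a_n, M_n, \vec V_n\rangle)$ be a canonical form of $\mathcal{C}$. Then each actor with name $a_i$ is either of the form $\langle a_i, \mathbf{return}\ W, \vec V_i\rangle$ for some value $W$, or of the form $\langle a_i, E[\mathbf{receive}], \epsilon\rangle$ for some evaluation context $E$.
   Context: The calculus $\lambda_{\mathrm{act}}$. Types $A,B,C ::= \mathbf{1} \mid A \xrightarrow{C} B \mid \mathsf{ActorRef}(A)$; $\alpha$ ranges over variables and names; values $V,W ::= \alpha \mid \lambda x.M \mid ()$; computations $M,N ::= V\,W \mid \mathbf{let}\ x \Leftarrow M\ \mathbf{in}\ N \mid \mathbf{return}\ V \mid \mathbf{spawn}\ M \mid \mathbf{send}\ V\ W \mid \mathbf{receive} \mid \mathbf{self}$. Value typing: $\Gamma\vdash\alpha:A$ if $\alpha:A\in\Gamma$; $\Gamma\vdash\lambda x.M:A\xrightarrow{C}B$ if $\Gamma,x:A\mid C\vdash M:B$; $\Gamma\vdash():\mathbf 1$. Computation typing $\Gamma\mid C\vdash M:A$: $V\,W:B$ if $\Gamma\vdash V:A\xrightarrow{C}B$, $\Gamma\vdash W:A$; $\Gamma\mid C\vdash\mathbf{let}\ x\Leftarrow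 M\ \mathbf{in}\ N:B$ if $\Gamma\mid C\vdash M:A$, $\Gamma,x:A\mid C\vdash N:B$; $\Gamma\mid C\vdash\mathbf{return}\ V:A$ if $\Gamma\vdash V:A$; $\Gamma\mid C\vdash\mathbf{send}\ V\ W:\mathbf 1$ if $\Gamma\vdash V:A$, $\Gamma\vdash W:\mathsf{ActorRef}(A)$; $\Gamma\mid A\vdash\mathbf{receive}:A$; $\Gamma\mid C\vdash\mathbf{spawn}\ M:\mathsf{ActorRef}(A)$ if $\Gamma\mid A\vdash M:\mathbf 1$; $\Gamma\mid A\vdash\mathbf{self}:\mathsf{ActorRef}(A)$. Evaluation contexts $E ::= [\,]\mid\mathbf{let}\ x\Leftarrow E\ \mathbf{in}\ M$; term reduction: $(\lambda x.M)V\longrightarrow_{\mathsf{M}} M\{V/x\}$, $\mathbf{let}\ x\Leftarrow\mathbf{return}\ V\ \mathbf{in}\ M\longrightarrow_{\mathsf{M}} M\{V/x\}$, $E[M]\longrightarrow_{\mathsf{M}}E[M']$ if $M\longrightarrow_{\mathsf{M}}M'$. Configurations $\mathcal{C},\mathcal{D} ::= \mathcal{C}\parallel\mathcal{D}\mid(\nu a)\mathcal{C}\mid\langle a,M,\vec V\rangle$ (actor named $a$ evaluating $M$ with mailbox $\vec V$; $\epsilon$ empty). Configuration contexts $G ::= [\,]\mid G\parallel\mathcal{C}\mid(\nu a)G$. Configuration typing: (Par) $\Gamma;\Delta_1\vdash\mathcal{C}_1$, $\Gamma;\Delta_2\vdash\mathcal{C}_2$ give $\Gamma;\Delta_1,\Delta_2\vdash\mathcal{C}_1\parallel\mathcal{C}_2$;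 (Pid) $\Gamma,a:\mathsf{ActorRef}(A);\Delta,a:A\vdash\mathcal{C}$ gives $\Gamma;\Delta\vdash(\nu a)\mathcal{C}$; (Actor) $\Gamma,a:\mathsf{ActorRef}(A)\mid A\vdash M:\mathbf 1$ and $\Gamma,a:\mathsf{ActorRef}(A)\vdash V_i:A$ for all $i$ give $\Gamma,a:\mathsf{ActorRef}(A);a:A\vdash\langle a,M,\vec V\rangle$. Structural congruence $\equiv$: least congruence closed under $G[-]$ with commutativity/associativity of $\parallel$ and $\mathcal{C}\parallel(\nu a)\mathcal{D}\equiv(\nu a)(\mathcal{C}\parallel\mathcal{D})$ if $a\notin\mathsf{fv}(\mathcal{C})$. Reduction $\longrightarrow$ (modulo $\equiv$): $\langle a,E[\mathbf{spawn}\ M],\vec V\rangle\longrightarrow(\nu b)(\langle a,E[\mathbf{return}\ b],\vec V\rangle\parallel\langle b,M,\epsilon\rangle)$, $b$ fresh; $\langle a,E[\mathbf{send}\ V'\ b],\vec V\rangle\parallel\langle b,M,\vec W\rangle\longrightarrow\langle a,E[\mathbf{return}\ ()],\vec V\rangle\parallel\langle b,M,\vec W\cdot V'\rangle$; $\langle a,E[\mathbf{send}\ V'\ a],\vec V\rangle\longrightarrow\langle a,E[\mathbf{return}\ ()],\vec V\cdot V'\rangle$; $\langle a,E[\mathbf{self}],\vec V\rangle\longrightarrow\langle a,E[\mathbf{return}\ a],\vec V\rangle$; $\langle a,E[\mathbf{receive}],W\cdot\vec V\rangle\longrightarrow\langle a,E[\mathbf{return}\ W],\vec V\rangle$; $G[\mathcal{C}_1]\longrightarrow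 G[\mathcal{C}_2]$ if $\mathcal{C}_1\longrightarrow\mathcal{C}_2$; $\langle a,M_1,\vec V\rangle\longrightarrow\langle a,M_2,\vec V\rangle$ if $M_1\longrightarrow_{\mathsf{M}}M_2$. A canonical form of $\mathcal{C}$ is a configuration $\mathcal{C}'\equiv\mathcal{C}$ of the form $(\nu a_1) \ldots (\nu a_n)(\langle a_1, M_1, \vec V_1\rangle \parallel \ldots \parallel \langle a_n, M_n, \vec V_n\rangle)$. *)

theory Defs
  imports Main
begin

text \<open>Locally nameless representation of lambda_act. Atoms (variables and
actor names share one namespace, as in the paper) are natural numbers;
binders of lambda and let are de Bruijn indices.\<close>

type_synonym atom = nat

datatype ty = TUnit | TFun ty ty ty | ActorRef ty
  \<comment> \<open>TFun A C B is the type A -C-> B\<close>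

datatype val = BVar nat | FVar atom | Lam comp | UnitV
     and comp = App val val | Let comp comp | Return val | Spawn comp
              | Send val val | Receive | Self

primrec open_val :: "nat \<Rightarrow> val \<Rightarrow> val \<Rightarrow> val"
    and open_comp :: "nat \<Rightarrow> val \<Rightarrow> comp \<Rightarrow> comp" where
  "open_val k u (BVar i) = (if i = k then u else BVar i)"
| "open_val k u (FVar x) = FVar x"
| "open_val k u (Lam M) = Lam (open_comp (Suc k) u M)"
| "open_val k u UnitV = UnitV"
| "open_comp k u (App V W) = App (open_val k u V) (open_val k u W)"
| "open_comp k u (Let M N) = Let (open_comp k u M) (open_comp (Suc k) u N)"
| "open_comp k u (Return V) = Return (open_val k u V)"
| "open_comp k u (Spawn M) = Spawn (open_comp k u M)"
| "open_comp k u (Send V W) = Send (open_val k u V) (open_val k u W)"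
| "open_comp k u Receive = Receive"
| "open_comp k u Self = Self"

definition inst :: "comp \<Rightarrow> val \<Rightarrow> comp" where
  "inst M V = open_comp 0 V M"

primrec fv_val :: "val \<Rightarrow> atom set" and fv_comp :: "comp \<Rightarrow> atom set" where
  "fv_val (BVar i) = {}"
| "fv_val (FVar x) = {x}"
| "fv_val (Lam M) = fv_comp M"
| "fv_val UnitV = {}"
| "fv_comp (App V W) = fv_val V \<union> fv_val W"
| "fv_comp (Let M N) = fv_comp M \<union> fv_comp N"
| "fv_comp (Return V) = fv_val V"
| "fv_comp (Spawn M) = fv_comp M"
| "fv_comp (Send V W) = fv_val V \<union> fv_val W"
| "fv_comp Receive = {}"
| "fv_comp Self = {}"

definition swap_atom :: "atom \<Rightarrow> atom \<Rightarrow> atom \<Rightarrow> atom" where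
  "swap_atom a b x = (if x = a then b else if x = b then a else x)"

primrec swap_val :: "atom \<Rightarrow> atom \<Rightarrow> val \<Rightarrow> val"
    and swap_comp :: "atom \<Rightarrow> atom \<Rightarrow> comp \<Rightarrow> comp" where
  "swap_val a b (BVar i) = BVar i"
| "swap_val a b (FVar x) = FVar (swap_atom a b x)"
| "swap_val a b (Lam M) = Lam (swap_comp a b M)"
| "swap_val a b UnitV = UnitV"
| "swap_comp a b (App V W) = App (swap_val a b V) (swap_val a b W)"
| "swap_comp a b (Let M N) = Let (swap_comp a b M) (swap_comp a b N)"
| "swap_comp a b (Return V) = Return (swap_val a b V)"
| "swap_comp a b (Spawn M) = Spawn (swap_comp a b M)"
| "swap_comp a b (Send V W) = Send (swap_val a b V) (swap_val a b W)"
| "swap_comp a b Receive = Receive"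
| "swap_comp a b Self = Self"

datatype ectx = Hole | ELet ectx comp

primrec plug :: "ectx \<Rightarrow> comp \<Rightarrow> comp" where
  "plug Hole M = M"
| "plug (ELet E N) M = Let (plug E M) N"

datatype conf = Par conf conf | Nu atom conf | Actor atom comp "val list"

primrec fn_conf :: "conf \<Rightarrow> atom set" where
  "fn_conf (Par C D) = fn_conf C \<union> fn_conf D"
| "fn_conf (Nu a C) = fn_conf C - {a}"
| "fn_conf (Actor a M Vs) = {a} \<union> fv_comp M \<union> (\<Union>V\<in>set Vs. fv_val V)"

primrec swap_conf :: "atom \<Rightarrow> atom \<Rightarrow> conf \<Rightarrow> conf" where
  "swap_conf a b (Par C D) = Par (swap_conf a b C) (swap_conf a b D)"
| "swap_conf a b (Nu c C) = Nu (swap_atom a b c) (swap_conf a b C)"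
| "swap_conf a b (Actor c M Vs) = Actor (swap_atom a b c) (swap_comp a b M) (map (swap_val a b) Vs)"

inductive vtyp :: "(atom \<rightharpoonup> ty) \<Rightarrow> val \<Rightarrow> ty \<Rightarrow> bool"
      and ctyp :: "(atom \<rightharpoonup> ty) \<Rightarrow> ty \<Rightarrow> comp \<Rightarrow> ty \<Rightarrow> bool" where
  T_Var: "\<Gamma> x = Some A \<Longrightarrow> vtyp \<Gamma> (FVar x) A"
| T_Lam: "finite L \<Longrightarrow> (\<forall>x. x \<notin> L \<longrightarrow> ctyp (\<Gamma>(x \<mapsto> A)) C (inst M (FVar x)) B)
          \<Longrightarrow> vtyp \<Gamma> (Lam M) (TFun A C B)"
| T_Unit: "vtyp \<Gamma> UnitV TUnit"
| T_App: "vtyp \<Gamma> V (TFun A C B) \<Longrightarrow> vtyp \<Gamma> W A \<Longrightarrow> ctyp \<Gamma> C (App V W) B"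
| T_Let: "ctyp \<Gamma> C M A \<Longrightarrow> finite L
          \<Longrightarrow> (\<forall>x. x \<notin> L \<longrightarrow> ctyp (\<Gamma>(x \<mapsto> A)) C (inst N (FVar x)) B)
          \<Longrightarrow> ctyp \<Gamma> C (Let M N) B"
| T_Return: "vtyp \<Gamma> V A \<Longrightarrow> ctyp \<Gamma> C (Return V) A"
| T_Send: "vtyp \<Gamma> V A \<Longrightarrow> vtyp \<Gamma> W (ActorRef A) \<Longrightarrow> ctyp \<Gamma> C (Send V W) TUnit"
| T_Receive: "ctyp \<Gamma> A Receive A"
| T_Spawn: "ctyp \<Gamma> A M TUnit \<Longrightarrow> ctyp \<Gamma> C (Spawn M) (ActorRef A)"
| T_Self: "ctyp \<Gamma> A Self (ActorRef A)"

inductive cfgtyp :: "(atom \<rightharpoonup> ty) \<Rightarrow> (atom \<rightharpoonup> ty) \<Rightarrow> conf \<Rightarrow> bool" where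
  T_Par: "cfgtyp \<Gamma> \<Delta>1 C1 \<Longrightarrow> cfgtyp \<Gamma> \<Delta>2 C2 \<Longrightarrow> dom \<Delta>1 \<inter> dom \<Delta>2 = {}
          \<Longrightarrow> cfgtyp \<Gamma> (\<Delta>1 ++ \<Delta>2) (Par C1 C2)"
| T_Pid: "cfgtyp (\<Gamma>(a \<mapsto> ActorRef A)) (\<Delta>(a \<mapsto> A)) C \<Longrightarrow> a \<notin> dom \<Delta>
          \<Longrightarrow> cfgtyp \<Gamma> \<Delta> (Nu a C)"
| T_Actor: "\<Gamma> a = Some (ActorRef A) \<Longrightarrow> ctyp \<Gamma> A M TUnit
          \<Longrightarrow> (\<forall>V\<in>set Vs. vtyp \<Gamma> V A)
          \<Longrightarrow> cfgtyp \<Gamma> [a \<mapsto> A] (Actor a M Vs)"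

inductive mred :: "comp \<Rightarrow> comp \<Rightarrow> bool" where
  M_Beta: "mred (App (Lam M) V) (inst M V)"
| M_Let: "mred (Let (Return V) M) (inst M V)"
| M_Ctx: "mred M M' \<Longrightarrow> mred (plug E M) (plug E M')"

text \<open>Structural congruence: least congruence (w.r.t. configuration contexts G)
containing commutativity/associativity of Par, scope extrusion, and
alpha-conversion of nu-binders (implicit in the paper).\<close>
inductive scong :: "conf \<Rightarrow> conf \<Rightarrow> bool" where
  S_refl: "scong C C"
| S_sym: "scong C D \<Longrightarrow> scong D C"
| S_trans: "scong C D \<Longrightarrow> scong D E \<Longrightarrow> scong C E"
| S_ParCtx: "scong C D \<Longrightarrow> scong (Par C E) (Par D E)"
| S_NuCtx: "scong C D \<Longrightarrow> scong (Nu a C) (Nu a D)"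
| S_comm: "scong (Par C D) (Par D C)"
| S_assoc: "scong (Par C (Par D E)) (Par (Par C D) E)"
| S_extr: "a \<notin> fn_conf C \<Longrightarrow> scong (Par C (Nu a D)) (Nu a (Par C D))"
| S_alpha: "b \<notin> fn_conf (Nu a C) \<Longrightarrow> scong (Nu a C) (Nu b (swap_conf a b C))"

inductive red :: "conf \<Rightarrow> conf \<Rightarrow> bool" where
  R_Spawn: "b \<noteq> a \<Longrightarrow> b \<notin> fv_comp (plug E (Spawn M)) \<Longrightarrow> b \<notin> (\<Union>V\<in>set Vs. fv_val V)
    \<Longrightarrow> red (Actor a (plug E (Spawn M)) Vs)
            (Nu b (Par (Actor a (plug E (Return (FVar b))) Vs) (Actor b M [])))"
| R_Send: "red (Par (Actor a (plug E (Send V' (FVar b))) Vs) (Actor b M Ws))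
              (Par (Actor a (plug E (Return UnitV)) Vs) (Actor b M (Ws @ [V'])))"
| R_SendSelf: "red (Actor a (plug E (Send V' (FVar a))) Vs)
                   (Actor a (plug E (Return UnitV)) (Vs @ [V']))"
| R_Self: "red (Actor a (plug E Self) Vs) (Actor a (plug E (Return (FVar a))) Vs)"
| R_Receive: "red (Actor a (plug E Receive) (W # Vs)) (Actor a (plug E (Return W)) Vs)"
| R_ParCtx: "red C1 C2 \<Longrightarrow> red (Par C1 D) (Par C2 D)"
| R_NuCtx: "red C1 C2 \<Longrightarrow> red (Nu a C1) (Nu a C2)"
| R_Term: "mred M1 M2 \<Longrightarrow> red (Actor a M1 Vs) (Actor a M2 Vs)"
| R_Cong: "scong C C1 \<Longrightarrow> red C1 C2 \<Longrightarrow> scong C2 D \<Longrightarrow> red C D"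

fun par_actors :: "(atom \<times> comp \<times> val list) list \<Rightarrow> conf" where
  "par_actors [] = undefined"
| "par_actors [(a, M, Vs)] = Actor a M Vs"
| "par_actors ((a, M, Vs) # xs) = Par (Actor a M Vs) (par_actors xs)"

fun nu_list :: "atom list \<Rightarrow> conf \<Rightarrow> conf" where
  "nu_list [] C = C"
| "nu_list (a # as) C = Nu a (nu_list as C)"

text \<open>(nu a1)...(nu an)(<a1,M1,V1> || ... || <an,Mn,Vn>), n \<ge> 1\<close>
definition canonical_conf :: "(atom \<times> comp \<times> val list) list \<Rightarrow> conf" where
  "canonical_conf acts = nu_list (map fst acts) (par_actors acts)"

end

theory Submission
  imports Defs
begin

text \<open>Structural congruence preserves configuration typing, so the canonical form
is well typed and each of its actors is typed in a context that contains only actor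
names. In such a context a well-typed computation is a returned value, reduces, or
is stuck on an effect (receive, self, spawn, or send to a known actor), because the
only closed values of function and actor-reference type are abstractions and names.
Every alternative other than a returned value or a receive on an empty mailbox lets
one actor, or two actors in the case of a send, reduce; rearranging the parallel
composition and closing under the binders turns this into a reduction of the
whole configuration.\<close>

section \<open>Free names and name swapping\<close>

lemma finite_fv: "finite (fv_val V)" "finite (fv_comp M)"
  by (induct V and M) auto

lemma fv_open:
  "fv_val (open_val k u V) \<subseteq> fv_val V \<union> fv_val u"
  "fv_comp (open_comp k u M) \<subseteq> fv_comp M \<union> fv_val u"
  by (induct V and M arbitrary: k and k) auto

lemma fv_inst: "fv_comp (inst M (FVar y)) \<subseteq> fv_comp M \<union> {y}"
  using fv_open(2)[of 0 "FVar y" M] by (simp add: inst_def)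

lemma swap_atom_swap_atom [simp]: "swap_atom a b (swap_atom a b x) = x"
  by (simp add: swap_atom_def)

lemma swap_atom_eq_iff [simp]: "swap_atom a b x = swap_atom a b y \<longleftrightarrow> x = y"
  by (auto simp: swap_atom_def)

lemma swap_atom_same [simp]: "swap_atom a a x = x"
  by (simp add: swap_atom_def)

lemma swap_atom_commute: "swap_atom a b = swap_atom b a"
  by (auto simp: swap_atom_def fun_eq_iff)

lemma swap_open:
  "swap_val a b (open_val k u V) = open_val k (swap_val a b u) (swap_val a b V)"
  "swap_comp a b (open_comp k u M) = open_comp k (swap_val a b u) (swap_comp a b M)"
  by (induct V and M arbitrary: k and k) auto

lemma swap_inst:
  "swap_comp a b (inst M (FVar y)) = inst (swap_comp a b M) (FVar (swap_atom a b y))"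
  by (simp add: inst_def swap_open)

lemma swap_same: "swap_val a a V = V" "swap_comp a a M = M"
  by (induct V and M) auto

lemma swap_commute: "swap_val a b V = swap_val b a V" "swap_comp a b M = swap_comp b a M"
  by (induct V and M) (auto simp: swap_atom_commute)

lemma swap_conf_same [simp]: "swap_conf a a C = C"
  by (induct C) (auto simp: swap_same map_idI)

lemma swap_swap: "swap_val a b (swap_val a b V) = V" "swap_comp a b (swap_comp a b M) = M"
  by (induct V and M) auto

lemma swap_conf_swap_conf [simp]: "swap_conf a b (swap_conf a b C) = C"
  by (induct C) (auto simp: swap_swap comp_def map_idI)

lemma swap_conf_commute: "swap_conf a b C = swap_conf b a C"
  by (induct C) (auto simp: swap_commute swap_atom_commute)

lemma fv_swap:
  "fv_val (swap_val a b V) = swap_atom a b ` fv_val V"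
  "fv_comp (swap_comp a b M) = swap_atom a b ` fv_comp M"
  by (induct V and M) (auto simp: image_Un)

lemma fn_swap_conf: "fn_conf (swap_conf a b C) = swap_atom a b ` fn_conf C"
proof (induct C)
  case (Nu c C)
  have "inj (swap_atom a b)" by (auto intro: injI)
  then show ?case using Nu by (simp add: image_set_diff)
qed (auto simp: fv_swap image_Un image_UN)

lemma map_upd_comp_swap_atom:
  "\<Gamma>(x \<mapsto> A) \<circ> swap_atom a b = (\<Gamma> \<circ> swap_atom a b)(swap_atom a b x \<mapsto> A)"
  by (auto simp: fun_eq_iff)

lemma dom_comp_swap_atom: "dom (m \<circ> swap_atom a b) = swap_atom a b ` dom m"
  by (auto simp: dom_def image_iff) (metis swap_atom_swap_atom)

section \<open>Typing of values and computations\<close>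

lemma typing_fv_cong:
  "vtyp \<Gamma> V T \<Longrightarrow> (\<And>\<Gamma>'. \<forall>x\<in>fv_val V. \<Gamma>' x = \<Gamma> x \<Longrightarrow> vtyp \<Gamma>' V T)"
  "ctyp \<Gamma> C M T \<Longrightarrow> (\<And>\<Gamma>'. \<forall>x\<in>fv_comp M. \<Gamma>' x = \<Gamma> x \<Longrightarrow> ctyp \<Gamma>' C M T)"
proof (induct rule: vtyp_ctyp.inducts)
  case (T_Lam L \<Gamma> A C M B)
  show ?case
  proof (rule vtyp_ctyp.T_Lam[where L="L \<union> fv_comp M"])
    show "finite (L \<union> fv_comp M)" using T_Lam by (simp add: finite_fv)
    show "\<forall>x. x \<notin> L \<union> fv_comp M \<longrightarrow> ctyp (\<Gamma>'(x \<mapsto> A)) C (inst M (FVar x)) B"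
    proof (intro allI impI)
      fix x assume x: "x \<notin> L \<union> fv_comp M"
      have "\<forall>y\<in>fv_comp (inst M (FVar x)). (\<Gamma>'(x \<mapsto> A)) y = (\<Gamma>(x \<mapsto> A)) y"
        using fv_inst[of M x] T_Lam.prems by auto
      then show "ctyp (\<Gamma>'(x \<mapsto> A)) C (inst M (FVar x)) B" using T_Lam x by blast
    qed
  qed
next
  case (T_Let \<Gamma> C M A L N B)
  show ?case
  proof (rule vtyp_ctyp.T_Let[where L="L \<union> fv_comp N"])
    show "ctyp \<Gamma>' C M A" using T_Let by auto
    show "finite (L \<union> fv_comp N)" using T_Let by (simp add: finite_fv)
    show "\<forall>x. x \<notin> L \<union> fv_comp N \<longrightarrow> ctyp (\<Gamma>'(x \<mapsto> A)) C (inst N (FVar x)) B"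
    proof (intro allI impI)
      fix x assume x: "x \<notin> L \<union> fv_comp N"
      have "\<forall>y\<in>fv_comp (inst N (FVar x)). (\<Gamma>'(x \<mapsto> A)) y = (\<Gamma>(x \<mapsto> A)) y"
        using fv_inst[of N x] T_Let.prems by auto
      then show "ctyp (\<Gamma>'(x \<mapsto> A)) C (inst N (FVar x)) B" using T_Let x by blast
    qed
  qed
qed (auto intro: vtyp_ctyp.intros)

lemma typing_swap:
  "vtyp \<Gamma> V T \<Longrightarrow> vtyp (\<Gamma> \<circ> swap_atom a b) (swap_val a b V) T"
  "ctyp \<Gamma> C M T \<Longrightarrow> ctyp (\<Gamma> \<circ> swap_atom a b) C (swap_comp a b M) T"
proof (induct rule: vtyp_ctyp.inducts)
  case (T_Lam L \<Gamma> A C M B)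
  have "ctyp ((\<Gamma> \<circ> swap_atom a b)(x \<mapsto> A)) C (inst (swap_comp a b M) (FVar x)) B"
    if "x \<notin> swap_atom a b ` L" for x
  proof -
    have "swap_atom a b x \<notin> L" using that by (metis image_eqI swap_atom_swap_atom)
    then have "ctyp (\<Gamma>(swap_atom a b x \<mapsto> A) \<circ> swap_atom a b) C
        (swap_comp a b (inst M (FVar (swap_atom a b x)))) B"
      using T_Lam(2) by blast
    then show ?thesis by (simp add: map_upd_comp_swap_atom swap_inst)
  qed
  then have "vtyp (\<Gamma> \<circ> swap_atom a b) (Lam (swap_comp a b M)) (TFun A C B)"
    using T_Lam(1) by (auto intro!: vtyp_ctyp.T_Lam[where L="swap_atom a b ` L"])
  then show ?case by (simp add: comp_def)
next
  case (T_Let \<Gamma> C M A L N B)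
  have "ctyp ((\<Gamma> \<circ> swap_atom a b)(x \<mapsto> A)) C (inst (swap_comp a b N) (FVar x)) B"
    if "x \<notin> swap_atom a b ` L" for x
  proof -
    have "swap_atom a b x \<notin> L" using that by (metis image_eqI swap_atom_swap_atom)
    then have "ctyp (\<Gamma>(swap_atom a b x \<mapsto> A) \<circ> swap_atom a b) C
        (swap_comp a b (inst N (FVar (swap_atom a b x)))) B"
      using T_Let(4) by blast
    then show ?thesis by (simp add: map_upd_comp_swap_atom swap_inst)
  qed
  then have "ctyp (\<Gamma> \<circ> swap_atom a b) C (Let (swap_comp a b M) (swap_comp a b N)) B"
    using T_Let(2,3) by (auto intro!: vtyp_ctyp.T_Let[where L="swap_atom a b ` L"] simp: comp_def)
  then show ?case by (simp add: comp_def)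
qed (auto intro: vtyp_ctyp.intros)

section \<open>Configuration typing and structural congruence\<close>

lemma cfgtyp_Par_iff:
  "cfgtyp \<Gamma> \<Delta> (Par C1 C2) \<longleftrightarrow> (\<exists>\<Delta>1 \<Delta>2. \<Delta> = \<Delta>1 ++ \<Delta>2 \<and> dom \<Delta>1 \<inter> dom \<Delta>2 = {}
     \<and> cfgtyp \<Gamma> \<Delta>1 C1 \<and> cfgtyp \<Gamma> \<Delta>2 C2)"
  by (subst cfgtyp.simps) auto

lemma cfgtyp_Nu_iff:
  "cfgtyp \<Gamma> \<Delta> (Nu a C) \<longleftrightarrow> (\<exists>A. a \<notin> dom \<Delta> \<and> cfgtyp (\<Gamma>(a \<mapsto> ActorRef A)) (\<Delta>(a \<mapsto> A)) C)"
  by (subst cfgtyp.simps) auto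

lemma cfgtyp_Actor_iff:
  "cfgtyp \<Gamma> \<Delta> (Actor a M Vs) \<longleftrightarrow> (\<exists>A. \<Delta> = [a \<mapsto> A] \<and> \<Gamma> a = Some (ActorRef A)
     \<and> ctyp \<Gamma> A M TUnit \<and> (\<forall>V\<in>set Vs. vtyp \<Gamma> V A))"
  by (subst cfgtyp.simps) auto

lemma cfgtyp_dom_subset_fn: "cfgtyp \<Gamma> \<Delta> C \<Longrightarrow> dom \<Delta> \<subseteq> fn_conf C"
  by (induct rule: cfgtyp.induct) auto

lemma cfgtyp_fn_cong:
  "cfgtyp \<Gamma> \<Delta> C \<Longrightarrow> \<forall>x\<in>fn_conf C. \<Gamma>' x = \<Gamma> x \<Longrightarrow> cfgtyp \<Gamma>' \<Delta> C"
proof (induct arbitrary: \<Gamma>' rule: cfgtyp.induct)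
  case (T_Par \<Gamma> \<Delta>1 C1 \<Delta>2 C2)
  then show ?case by (auto intro: cfgtyp.intros)
next
  case (T_Pid \<Gamma> a A \<Delta> C)
  have "cfgtyp (\<Gamma>'(a \<mapsto> ActorRef A)) (\<Delta>(a \<mapsto> A)) C"
    using T_Pid by (intro T_Pid(2)) auto
  then show ?case using T_Pid(3) by (rule cfgtyp.T_Pid)
next
  case (T_Actor \<Gamma> a A M Vs)
  then show ?case
    by (intro cfgtyp.T_Actor) (auto intro: typing_fv_cong)
qed

lemma cfgtyp_swap:
  "cfgtyp \<Gamma> \<Delta> C \<Longrightarrow> cfgtyp (\<Gamma> \<circ> swap_atom a b) (\<Delta> \<circ> swap_atom a b) (swap_conf a b C)"
proof (induct rule: cfgtyp.induct)
  case (T_Par \<Gamma> \<Delta>1 C1 \<Delta>2 C2)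
  have "dom (\<Delta>1 \<circ> swap_atom a b) \<inter> dom (\<Delta>2 \<circ> swap_atom a b) = {}"
    using T_Par(5) by (auto simp: dom_comp_swap_atom)
  moreover have "(\<Delta>1 ++ \<Delta>2) \<circ> swap_atom a b = (\<Delta>1 \<circ> swap_atom a b) ++ (\<Delta>2 \<circ> swap_atom a b)"
    by (auto simp: fun_eq_iff map_add_def split: option.splits)
  ultimately show ?case
    using cfgtyp.T_Par[OF T_Par(2,4)] by (simp only: swap_conf.simps)
next
  case (T_Pid \<Gamma> c A \<Delta> C)
  have "swap_atom a b c \<notin> dom (\<Delta> \<circ> swap_atom a b)"
    using T_Pid(3) by (simp add: dom_comp_swap_atom inj_image_mem_iff inj_def)
  with T_Pid(2) show ?case
    unfolding map_upd_comp_swap_atom swap_conf.simps by (rule cfgtyp.T_Pid)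
next
  case (T_Actor \<Gamma> c A M Vs)
  have "[c \<mapsto> A] \<circ> swap_atom a b = [swap_atom a b c \<mapsto> A]"
    by (auto simp: fun_eq_iff)
  moreover have "cfgtyp (\<Gamma> \<circ> swap_atom a b) [swap_atom a b c \<mapsto> A]
      (Actor (swap_atom a b c) (swap_comp a b M) (map (swap_val a b) Vs))"
    using T_Actor by (intro cfgtyp.T_Actor) (auto simp: typing_swap)
  ultimately show ?case by (simp only: swap_conf.simps)
qed

lemma cfgtyp_Nu_swap:
  assumes b: "b \<notin> fn_conf (Nu a C)" and typed: "cfgtyp \<Gamma> \<Delta> (Nu a C)"
  shows "cfgtyp \<Gamma> \<Delta> (Nu b (swap_conf a b C))"
proof (cases "a = b")
  case False
  from typed obtain A where a: "a \<notin> dom \<Delta>"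
    and typed_C: "cfgtyp (\<Gamma>(a \<mapsto> ActorRef A)) (\<Delta>(a \<mapsto> A)) C"
    by (auto simp: cfgtyp_Nu_iff)
  have b_C: "b \<notin> fn_conf C" using b False by auto
  have b_\<Delta>: "b \<notin> dom \<Delta>" using b cfgtyp_dom_subset_fn[OF typed] by auto
  have "\<Delta> \<circ> swap_atom a b = \<Delta>"
    using a b_\<Delta> by (auto simp: fun_eq_iff swap_atom_def)
  moreover have "cfgtyp ((\<Gamma> \<circ> swap_atom a b)(b \<mapsto> ActorRef A)) ((\<Delta> \<circ> swap_atom a b)(b \<mapsto> A))
      (swap_conf a b C)"
    using cfgtyp_swap[OF typed_C, of a b] by (simp add: map_upd_comp_swap_atom swap_atom_def)
  moreover have "\<forall>x\<in>fn_conf (swap_conf a b C).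
      (\<Gamma>(b \<mapsto> ActorRef A)) x = ((\<Gamma> \<circ> swap_atom a b)(b \<mapsto> ActorRef A)) x"
    \<comment> \<open>outside \<open>b\<close>, a free name of the swapped body is the image of a free name of
        \<open>C\<close> other than \<open>a\<close> and \<open>b\<close>, which the swap fixes\<close>
    using b_C by (auto simp: fn_swap_conf swap_atom_def)
  ultimately have "cfgtyp (\<Gamma>(b \<mapsto> ActorRef A)) (\<Delta>(b \<mapsto> A)) (swap_conf a b C)"
    by (metis cfgtyp_fn_cong)
  then show ?thesis using b_\<Delta> by (auto simp: cfgtyp_Nu_iff)
qed (use typed in simp)

lemma cfgtyp_Nu_swap_iff:
  assumes "b \<notin> fn_conf (Nu a C)"
  shows "cfgtyp \<Gamma> \<Delta> (Nu a C) \<longleftrightarrow> cfgtyp \<Gamma> \<Delta> (Nu b (swap_conf a b C))"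
proof (rule iffI[OF cfgtyp_Nu_swap[OF assms]])
  have "a \<notin> fn_conf (Nu b (swap_conf a b C))"
    using assms by (auto simp: fn_swap_conf swap_atom_def split: if_splits)
  then show "cfgtyp \<Gamma> \<Delta> (Nu b (swap_conf a b C)) \<Longrightarrow> cfgtyp \<Gamma> \<Delta> (Nu a C)"
    using cfgtyp_Nu_swap[of a b "swap_conf a b C"] by (simp add: swap_conf_commute)
qed

lemma cfgtyp_extrusion_iff:
  assumes a: "a \<notin> fn_conf C"
  shows "cfgtyp \<Gamma> \<Delta> (Par C (Nu a D)) \<longleftrightarrow> cfgtyp \<Gamma> \<Delta> (Nu a (Par C D))"
proof
  assume "cfgtyp \<Gamma> \<Delta> (Par C (Nu a D))"
  then obtain \<Delta>1 \<Delta>2 A where \<Delta>: "\<Delta> = \<Delta>1 ++ \<Delta>2" "dom \<Delta>1 \<inter> dom \<Delta>2 = {}"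
    and typed_C: "cfgtyp \<Gamma> \<Delta>1 C" and a_\<Delta>2: "a \<notin> dom \<Delta>2"
    and typed_D: "cfgtyp (\<Gamma>(a \<mapsto> ActorRef A)) (\<Delta>2(a \<mapsto> A)) D"
    by (auto simp: cfgtyp_Par_iff cfgtyp_Nu_iff)
  have a_\<Delta>1: "a \<notin> dom \<Delta>1" using cfgtyp_dom_subset_fn[OF typed_C] a by auto
  have "cfgtyp (\<Gamma>(a \<mapsto> ActorRef A)) \<Delta>1 C" using cfgtyp_fn_cong[OF typed_C] a by auto
  then have "cfgtyp (\<Gamma>(a \<mapsto> ActorRef A)) (\<Delta>1 ++ \<Delta>2(a \<mapsto> A)) (Par C D)"
    using typed_D \<Delta>(2) a_\<Delta>1 by (intro cfgtyp.T_Par) auto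
  then show "cfgtyp \<Gamma> \<Delta> (Nu a (Par C D))"
    using \<Delta> a_\<Delta>1 a_\<Delta>2 by (auto simp: cfgtyp_Nu_iff)
next
  assume "cfgtyp \<Gamma> \<Delta> (Nu a (Par C D))"
  then obtain A \<Delta>1 \<Delta>2 where a_\<Delta>: "a \<notin> dom \<Delta>"
    and split: "\<Delta>(a \<mapsto> A) = \<Delta>1 ++ \<Delta>2" "dom \<Delta>1 \<inter> dom \<Delta>2 = {}"
    and typed_C: "cfgtyp (\<Gamma>(a \<mapsto> ActorRef A)) \<Delta>1 C"
    and typed_D: "cfgtyp (\<Gamma>(a \<mapsto> ActorRef A)) \<Delta>2 D"
    by (auto simp: cfgtyp_Par_iff cfgtyp_Nu_iff)
  have a_\<Delta>1: "a \<notin> dom \<Delta>1" using cfgtyp_dom_subset_fn[OF typed_C] a by auto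
  have "(\<Delta>1 ++ \<Delta>2) a = Some A" using split(1) by (metis fun_upd_same)
  then have "\<Delta>2 a = Some A" using a_\<Delta>1 by (auto simp: map_add_def dom_def split: option.splits)
  then have \<Delta>2: "\<Delta>2 = (\<Delta>2(a := None))(a \<mapsto> A)" by (auto simp: fun_eq_iff)
  have "\<Delta> x = (\<Delta>1 ++ \<Delta>2(a := None)) x" for x
    using a_\<Delta> a_\<Delta>1 fun_cong[OF split(1), of x]
    by (cases "x = a") (auto simp: map_add_def dom_def split: option.splits)
  then have \<Delta>: "\<Delta> = \<Delta>1 ++ \<Delta>2(a := None)" ..
  have "cfgtyp \<Gamma> \<Delta>1 C" using cfgtyp_fn_cong[OF typed_C] a by auto
  moreover have "cfgtyp \<Gamma> (\<Delta>2(a := None)) (Nu a D)"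
  proof (rule cfgtyp.T_Pid)
    show "cfgtyp (\<Gamma>(a \<mapsto> ActorRef A)) ((\<Delta>2(a := None))(a \<mapsto> A)) D"
      using typed_D by (simp only: \<Delta>2[symmetric])
  qed simp
  ultimately show "cfgtyp \<Gamma> \<Delta> (Par C (Nu a D))"
    unfolding \<Delta> using split(2) by (intro cfgtyp.T_Par) auto
qed

lemma scong_cfgtyp: "scong C D \<Longrightarrow> cfgtyp \<Gamma> \<Delta> C \<longleftrightarrow> cfgtyp \<Gamma> \<Delta> D"
proof (induct arbitrary: \<Gamma> \<Delta> rule: scong.induct)
  case (S_NuCtx C D a)
  then show ?case by (simp only: cfgtyp_Nu_iff)
next
  case (S_comm C D)
  then show ?case by (auto simp: cfgtyp_Par_iff) (metis inf_commute map_add_comm)+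
next
  case (S_assoc C D E)
  show ?case
  proof
    assume "cfgtyp \<Gamma> \<Delta> (Par C (Par D E))"
    then obtain d1 d2 d3 where "\<Delta> = d1 ++ (d2 ++ d3)" "dom d1 \<inter> (dom d2 \<union> dom d3) = {}"
      "dom d2 \<inter> dom d3 = {}" "cfgtyp \<Gamma> d1 C" "cfgtyp \<Gamma> d2 D" "cfgtyp \<Gamma> d3 E"
      by (force simp: cfgtyp_Par_iff Int_Un_distrib Int_Un_distrib2)
    then show "cfgtyp \<Gamma> \<Delta> (Par (Par C D) E)"
      using cfgtyp.T_Par[OF cfgtyp.T_Par[of \<Gamma> d1 C d2 D], of d3 E] by auto
  next
    assume "cfgtyp \<Gamma> \<Delta> (Par (Par C D) E)"
    then obtain d1 d2 d3 where "\<Delta> = (d1 ++ d2) ++ d3" "(dom d1 \<union> dom d2) \<inter> dom d3 = {}"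
      "dom d1 \<inter> dom d2 = {}" "cfgtyp \<Gamma> d1 C" "cfgtyp \<Gamma> d2 D" "cfgtyp \<Gamma> d3 E"
      by (force simp: cfgtyp_Par_iff Int_Un_distrib Int_Un_distrib2)
    then show "cfgtyp \<Gamma> \<Delta> (Par C (Par D E))"
      using cfgtyp.T_Par[of \<Gamma> d1 C "d2 ++ d3" "Par D E", OF _ cfgtyp.T_Par[of \<Gamma> d2 D d3 E]]
      by auto
  qed
next
  case (S_extr a C D)
  then show ?case by (rule cfgtyp_extrusion_iff)
next
  case (S_alpha b a C)
  then show ?case by (rule cfgtyp_Nu_swap_iff)
qed (auto simp: cfgtyp_Par_iff)

section \<open>Progress for computations\<close>

lemma vtyp_TFun_Lam: "vtyp \<Gamma> V (TFun A C B) \<Longrightarrow> ran \<Gamma> \<subseteq> range ActorRef \<Longrightarrow> \<exists>M. V = Lam M"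
  by (cases rule: vtyp.cases) (auto simp: ran_def)

lemma vtyp_ActorRef_FVar: "vtyp \<Gamma> V (ActorRef A) \<Longrightarrow> \<exists>b. V = FVar b \<and> b \<in> dom \<Gamma>"
  by (cases rule: vtyp.cases) auto

definition effect_redex :: "(atom \<rightharpoonup> ty) \<Rightarrow> comp \<Rightarrow> bool" where
  "effect_redex \<Gamma> P \<longleftrightarrow> P = Receive \<or> P = Self \<or> (\<exists>N. P = Spawn N)
     \<or> (\<exists>V b. P = Send V (FVar b) \<and> b \<in> dom \<Gamma>)"

lemma ctyp_progress:
  assumes "ctyp \<Gamma> C M T" and "ran \<Gamma> \<subseteq> range ActorRef"
  shows "(\<exists>W. M = Return W) \<or> (\<exists>M'. mred M M') \<or> (\<exists>E P. M = plug E P \<and> effect_redex \<Gamma> P)"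
  using assms
proof (induct rule: vtyp_ctyp.inducts(2)[where ?P1.0 = "\<lambda>_ _ _. True"])
  case (T_App \<Gamma> V A C B W)
  then obtain N where "V = Lam N" using vtyp_TFun_Lam by blast
  then show ?case using mred.M_Beta by blast
next
  case (T_Let \<Gamma> C M A L N B)
  have "Let M N = plug (ELet Hole N) M" and "\<And>E P. Let (plug E P) N = plug (ELet E N) P"
    by simp_all
  with T_Let(2)[OF T_Let.prems] show ?case
    by (metis mred.M_Ctx mred.M_Let)
next
  case (T_Send \<Gamma> V A W C)
  then obtain b where "W = FVar b" "b \<in> dom \<Gamma>" using vtyp_ActorRef_FVar by blast
  then show ?case by (metis effect_redex_def plug.simps(1))
qed (auto simp: effect_redex_def, (metis plug.simps(1))+)

section \<open>Reducibility of parallel actors\<close>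

definition reducible :: "conf \<Rightarrow> bool" where
  "reducible C \<longleftrightarrow> (\<exists>C'. red C C')"

lemma reducible_scong: "scong C D \<Longrightarrow> reducible D \<Longrightarrow> reducible C"
  unfolding reducible_def using R_Cong[OF _ _ S_refl] by blast

lemma reducible_Par: "reducible C \<Longrightarrow> reducible (Par C D)"
  unfolding reducible_def using R_ParCtx by blast

lemma reducible_nu_list: "reducible C \<Longrightarrow> reducible (nu_list as C)"
  unfolding reducible_def by (induct as) (auto intro: R_NuCtx)

declare S_trans [trans]

lemma scong_Par_right: "scong C D \<Longrightarrow> scong (Par E C) (Par E D)"
proof -
  assume "scong C D"
  have "scong (Par E C) (Par C E)" by (rule S_comm)
  also have "scong \<dots> (Par D E)" using \<open>scong C D\<close> by (rule S_ParCtx)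
  also have "scong \<dots> (Par E D)" by (rule S_comm)
  finally show ?thesis .
qed

lemma scong_Par_left_commute: "scong (Par C (Par D E)) (Par D (Par C E))"
proof -
  have "scong (Par C (Par D E)) (Par (Par C D) E)" by (rule S_assoc)
  also have "scong \<dots> (Par (Par D C) E)" by (intro S_ParCtx S_comm)
  also have "scong \<dots> (Par D (Par C E))" by (rule S_sym, rule S_assoc)
  finally show ?thesis .
qed

lemma par_actors_Cons:
  "xs \<noteq> [] \<Longrightarrow> par_actors (x # xs) = Par (par_actors [x]) (par_actors xs)"
  by (cases x; cases xs) auto

lemma scong_par_actors_remove1:
  "x \<in> set xs \<Longrightarrow> scong (par_actors xs) (par_actors (x # remove1 x xs))"
proof (induct xs)
  case (Cons y ys)
  show ?case
  proof (cases "x = y")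
    case False
    with Cons have x: "x \<in> set ys" and ys: "ys \<noteq> []" by auto
    let ?Y = "par_actors [y]" and ?r = "remove1 x ys"
    have "scong (par_actors (y # ys)) (Par ?Y (par_actors (x # ?r)))"
      unfolding par_actors_Cons[OF ys] using Cons(1)[OF x] by (rule scong_Par_right)
    also have "scong \<dots> (par_actors (x # y # ?r))"
    proof (cases "?r = []")
      case True
      then show ?thesis by (simp add: par_actors_Cons S_comm)
    next
      case False
      then show ?thesis by (simp add: par_actors_Cons scong_Par_left_commute)
    qed
    finally show ?thesis using False by simp
  qed (auto intro: S_refl)
qed simp

lemma reducible_par_actors_member:
  assumes "x \<in> set xs" and "reducible (par_actors [x])"
  shows "reducible (par_actors xs)"
proof (rule reducible_scong[OF scong_par_actors_remove1[OF assms(1)]])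
  show "reducible (par_actors (x # remove1 x xs))"
    using assms(2) by (cases "remove1 x xs = []") (simp_all add: par_actors_Cons reducible_Par)
qed

lemma reducible_par_actors_pair:
  assumes x: "x \<in> set xs" and y: "y \<in> set xs" and "x \<noteq> y"
    and reducible_xy: "reducible (Par (par_actors [x]) (par_actors [y]))"
  shows "reducible (par_actors xs)"
proof -
  let ?r = "remove1 x xs"
  have y_r: "y \<in> set ?r" using y \<open>x \<noteq> y\<close> by (simp add: in_set_remove1)
  then have "?r \<noteq> []" by auto
  then have "scong (par_actors xs) (Par (par_actors [x]) (par_actors ?r))"
    using scong_par_actors_remove1[OF x] by (simp add: par_actors_Cons)
  also have "scong \<dots> (Par (par_actors [x]) (par_actors (y # remove1 y ?r)))"
    using scong_par_actors_remove1[OF y_r] by (rule scong_Par_right)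
  finally have xs: "scong (par_actors xs) (Par (par_actors [x]) (par_actors (y # remove1 y ?r)))" .
  show ?thesis
  proof (cases "remove1 y ?r = []")
    case True
    then show ?thesis using reducible_scong[OF xs] reducible_xy by simp
  next
    case False
    have "scong (par_actors xs) (Par (Par (par_actors [x]) (par_actors [y])) (par_actors (remove1 y ?r)))"
      using S_trans[OF xs[unfolded par_actors_Cons[OF False]] S_assoc] .
    then show ?thesis using reducible_scong reducible_Par reducible_xy by blast
  qed
qed

lemma cfgtyp_nu_list:
  "cfgtyp \<Gamma> \<Delta> (nu_list as C) \<Longrightarrow>
   \<exists>\<Gamma>' \<Delta>'. cfgtyp \<Gamma>' \<Delta>' C \<and> dom \<Gamma>' \<subseteq> dom \<Gamma> \<union> set as \<and> ran \<Gamma>' \<subseteq> ran \<Gamma> \<union> range ActorRef"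
proof (induct as arbitrary: \<Gamma> \<Delta>)
  case (Cons a as)
  then obtain A where "cfgtyp (\<Gamma>(a \<mapsto> ActorRef A)) (\<Delta>(a \<mapsto> A)) (nu_list as C)"
    by (auto simp: cfgtyp_Nu_iff)
  from Cons(1)[OF this] obtain \<Gamma>' \<Delta>' where typed: "cfgtyp \<Gamma>' \<Delta>' C"
    and "dom \<Gamma>' \<subseteq> dom (\<Gamma>(a \<mapsto> ActorRef A)) \<union> set as"
    and "ran \<Gamma>' \<subseteq> ran (\<Gamma>(a \<mapsto> ActorRef A)) \<union> range ActorRef"
    by blast
  moreover have "ran (\<Gamma>(a \<mapsto> ActorRef A)) \<subseteq> ran \<Gamma> \<union> range ActorRef"
    by (auto simp: ran_def)
  ultimately show ?case using typed by (intro exI[of _ \<Gamma>'] exI[of _ \<Delta>']) auto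
qed auto

lemma cfgtyp_par_actors_member:
  "cfgtyp \<Gamma> \<Delta> (par_actors xs) \<Longrightarrow> (a, M, Vs) \<in> set xs \<Longrightarrow> \<exists>A. ctyp \<Gamma> A M TUnit"
proof (induct xs arbitrary: \<Delta> rule: par_actors.induct)
  case (3 b N Ws y zs)
  then show ?case by (auto simp: cfgtyp_Par_iff cfgtyp_Actor_iff)
qed (auto simp: cfgtyp_Actor_iff)

lemma reducible_Actor_effect_redex:
  assumes redex: "effect_redex \<Gamma> P" and mail: "P = Receive \<longrightarrow> Vs \<noteq> []"
    and send_self: "\<forall>V b. P = Send V (FVar b) \<longrightarrow> b = a"
  shows "reducible (Actor a (plug E P) Vs)"
proof -
  consider (receive) "P = Receive" | (self) "P = Self" | (spawn) N where "P = Spawn N"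
    | (send) V where "P = Send V (FVar a)"
    using redex send_self unfolding effect_redex_def by blast
  then show ?thesis
  proof cases
    case receive
    with mail show ?thesis by (cases Vs) (auto simp: reducible_def intro: R_Receive)
  next
    case self
    then show ?thesis using R_Self reducible_def by blast
  next
    case (spawn N)
    have "finite (insert a (fv_comp (plug E P) \<union> (\<Union>V\<in>set Vs. fv_val V)))"
      by (simp add: finite_fv)
    then obtain b where "b \<notin> insert a (fv_comp (plug E P) \<union> (\<Union>V\<in>set Vs. fv_val V))"
      using ex_new_if_finite[OF infinite_UNIV_nat] by blast
    then show ?thesis using spawn R_Spawn[of b a E N Vs] by (auto simp: reducible_def)
  next
    case send
    then show ?thesis using R_SendSelf reducible_def by blast
  qed
qed

lemma actor_progress:
  assumes "ctyp \<Gamma> A M TUnit" and "ran \<Gamma> \<subseteq> range ActorRef"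
  shows "(\<exists>W. M = Return W) \<or> (\<exists>E. M = plug E Receive \<and> Vs = []) \<or> reducible (Actor a M Vs)
    \<or> (\<exists>E V b. M = plug E (Send V (FVar b)) \<and> b \<in> dom \<Gamma> \<and> b \<noteq> a)"
  using ctyp_progress[OF assms]
proof (elim disjE exE conjE)
  fix M' assume "mred M M'"
  then show ?thesis using R_Term reducible_def by blast
next
  fix E P assume M: "M = plug E P" and redex: "effect_redex \<Gamma> P"
  show ?thesis
  proof (cases "P = Receive \<and> Vs = [] \<or> (\<exists>V b. P = Send V (FVar b) \<and> b \<noteq> a)")
    case True
    then show ?thesis using M redex unfolding effect_redex_def by blast
  next
    case False
    then show ?thesis using reducible_Actor_effect_redex[OF redex] M by auto
  qed
qed auto

lemma par_actors_weak_progress: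
  assumes member: "(a, M, Vs) \<in> set acts"
    and typed: "cfgtyp \<Gamma> \<Delta> (par_actors acts)"
    and dom_\<Gamma>: "dom \<Gamma> \<subseteq> fst ` set acts" and ran_\<Gamma>: "ran \<Gamma> \<subseteq> range ActorRef"
  shows "(\<exists>W. M = Return W) \<or> (\<exists>E. M = plug E Receive \<and> Vs = []) \<or> reducible (par_actors acts)"
proof -
  obtain A where "ctyp \<Gamma> A M TUnit" using cfgtyp_par_actors_member[OF typed member] ..
  from actor_progress[OF this ran_\<Gamma>, of Vs a] show ?thesis
  proof (elim disjE exE conjE)
    assume "reducible (Actor a M Vs)"
    then show ?thesis using reducible_par_actors_member[OF member] by simp
  next
    fix E V b assume M: "M = plug E (Send V (FVar b))" and "b \<in> dom \<Gamma>" and "b \<noteq> a"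
    then obtain Mb Wb where member_b: "(b, Mb, Wb) \<in> set acts" using dom_\<Gamma> by force
    have "red (Par (Actor a M Vs) (Actor b Mb Wb))
        (Par (Actor a (plug E (Return UnitV)) Vs) (Actor b Mb (Wb @ [V])))"
      unfolding M by (rule R_Send)
    then have "reducible (Par (par_actors [(a, M, Vs)]) (par_actors [(b, Mb, Wb)]))"
      unfolding reducible_def by auto
    then show ?thesis
      using reducible_par_actors_pair[OF member member_b] \<open>b \<noteq> a\<close> by auto
  qed auto
qed

theorem theorem16:
  fixes C :: conf and acts :: "(atom \<times> comp \<times> val list) list"
  assumes "cfgtyp Map.empty Map.empty C"
    and "\<not> (\<exists>C'. red C C')"
    and "acts \<noteq> []"
    and "scong (canonical_conf acts) C"
  shows "\<forall>(a, M, Vs) \<in> set acts.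
           (\<exists>W. M = Return W) \<or> (\<exists>E. M = plug E Receive \<and> Vs = [])"
proof -
  have "cfgtyp Map.empty Map.empty (nu_list (map fst acts) (par_actors acts))"
    using scong_cfgtyp[OF assms(4)] assms(1) by (simp add: canonical_conf_def)
  then obtain \<Gamma> \<Delta> where "cfgtyp \<Gamma> \<Delta> (par_actors acts)"
    and "dom \<Gamma> \<subseteq> fst ` set acts" and "ran \<Gamma> \<subseteq> range ActorRef"
    using cfgtyp_nu_list by fastforce
  moreover have "\<not> reducible (par_actors acts)"
  proof
    assume "reducible (par_actors acts)"
    then have "reducible (canonical_conf acts)"
      unfolding canonical_conf_def by (rule reducible_nu_list)
    then show False
      using reducible_scong[OF S_sym[OF assms(4)]] assms(2) by (simp add: reducible_def)
  qed
  ultimately show ?thesis using par_actors_weak_progress by blast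
qed

end
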